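(* Let $D$ be an oriented diagram with double lines representing a knot in $S_g\times S^1$, and let $c$ be a classical crossing of $D$. Then the crossing sliding move at $c$ (inserting, on each of the two strands through $c$, a double line of sign $\varepsilon$ immediately before $c$ and a double line of sign $-\varepsilon$ immediately after $c$, with the same $\varepsilon\in\{\pm1\}$ for both strands, without changing the crossing; or the inverse operation) can be realized as a finite composition of the moves (R), (V), (4), (5) defining equivalence of diagrams with double lines; in fact it is a composition of two crossing change moves.
   Context: $S_g$ is a closed oriented surface of genus $g$; a knot in $S_g\times S^1$ is a smooth embedding of $S^1$, and knots are considered up to equivalence, i.e. isotopy together with stabilization/destabilization of $S_g\times S^1$ (destabilization: cut along a torus homotopic to $C\times S^1$, $C$ a non-contractible circle on the surface, the torus being disjoint from the knot, and glue two copies of $D^2\times S^1$ to the new boundary tori). Fix $x_0\in S^1$. A knot is represented by a diagram with double lines: a virtual knot diagram in the plane (classical and virtual crossings) decorated by finitely many double lines, i.e. marks on the curve away from crossings recording the points where the knot meets $S_g\times\{x_0\}$. For an oriented diagram every double line has a sign $\pm1$ according to the direction in which the knot passes through $S_g\times\{x_0\}$. Two diagrams represent equivalent knots iff they are related by finitely many of the moves: (R) generalized Reidemeister moves of virtual knot theory; (V) sliding a double line along the curve through a virtual crossing; (4) sliding a double line along its strand through a classical crossing while switching the over/under information of that crossing; (5) creating or deleting two adjacent double lines of opposite signs on an arc. A crossing change move at a classical crossing $c$ is the composite of (5) and (4): it switches the over/under information at $c$ and leaves, on one strand through $c$, two double lines of opposite signs immediately before and after $c$. *)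

theory Defs
  imports Main
begin

text \<open>Diagrams with double lines are encoded by their (signed) Gauss words.
  A letter is either a passage through a classical crossing (label, over/under flag)
  or a double line with its sign.  Virtual crossings are not recorded, so move (V)
  is built into the encoding; the word is read cyclically along the orientation,
  so words are considered up to rotation.\<close>

datatype letter = Cross nat bool | DL int

record diagram =
  word :: "letter list"
  csign :: "nat \<Rightarrow> int"

definition rot_eq :: "'a list \<Rightarrow> 'a list \<Rightarrow> bool" where
  "rot_eq u v \<longleftrightarrow> (\<exists>n. v = rotate n u)"

definition wf_diagram :: "diagram \<Rightarrow> bool" where
  "wf_diagram D \<longleftrightarrow>
     (\<forall>c b. Cross c b \<in> set (word D) \<longrightarrow>
        count_list (word D) (Cross c True) = 1 \<and> count_list (word D) (Cross c False) = 1
        \<and> csign D c \<in> {1, -1})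
   \<and> (\<forall>e. DL e \<in> set (word D) \<longrightarrow> e \<in> {1, -1})"

definition is_classical_crossing :: "diagram \<Rightarrow> nat \<Rightarrow> bool" where
  "is_classical_crossing D c \<longleftrightarrow> Cross c True \<in> set (word D) \<and> Cross c False \<in> set (word D)"

fun sw :: "nat \<Rightarrow> letter \<Rightarrow> letter" where
  "sw c (Cross d b) = (if d = c then Cross d (\<not> b) else Cross d b)"
| "sw c (DL e) = DL e"

definition switch_diag :: "nat \<Rightarrow> diagram \<Rightarrow> letter list \<Rightarrow> diagram" where
  "switch_diag c D w = \<lparr>word = map (sw c) w, csign = (csign D)(c := - csign D c)\<rparr>"

definition move5 :: "diagram \<Rightarrow> diagram \<Rightarrow> bool" where
  "move5 D D' \<longleftrightarrow> csign D' = csign D \<and>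
     (\<exists>a d e. e \<in> {1, -1} \<and>
       ((rot_eq (word D) (a @ d) \<and> rot_eq (word D') (a @ [DL e, DL (-e)] @ d)) \<or>
        (rot_eq (word D) (a @ [DL e, DL (-e)] @ d) \<and> rot_eq (word D') (a @ d))))"

definition move4 :: "diagram \<Rightarrow> diagram \<Rightarrow> bool" where
  "move4 D D' \<longleftrightarrow>
     (\<exists>a d e c b. csign D' = (csign D)(c := - csign D c) \<and>
       ((rot_eq (word D) (a @ [DL e, Cross c b] @ d) \<and>
         rot_eq (word D') (map (sw c) (a @ [Cross c b, DL e] @ d))) \<or>
        (rot_eq (word D) (a @ [Cross c b, DL e] @ d) \<and>
         rot_eq (word D') (map (sw c) (a @ [DL e, Cross c b] @ d)))))"

definition crossing_change :: "nat \<Rightarrow> diagram \<Rightarrow> diagram \<Rightarrow> bool" where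
  "crossing_change c D D' \<longleftrightarrow>
     (\<exists>a d e b. e \<in> {1, -1} \<and> rot_eq (word D) (a @ [Cross c b] @ d) \<and>
        rot_eq (word D') (map (sw c) (a @ [DL e, Cross c b, DL (-e)] @ d)) \<and>
        csign D' = (csign D)(c := - csign D c))"

text \<open>Crossing sliding move at c (forward direction; the inverse operation is the
  converse relation).\<close>
definition crossing_slide :: "nat \<Rightarrow> diagram \<Rightarrow> diagram \<Rightarrow> bool" where
  "crossing_slide c D D' \<longleftrightarrow> csign D' = csign D \<and>
     (\<exists>a m d e b1 b2. e \<in> {1, -1} \<and>
        rot_eq (word D) (a @ [Cross c b1] @ m @ [Cross c b2] @ d) \<and>
        rot_eq (word D') (a @ [DL e, Cross c b1, DL (-e)] @ m @ [DL e, Cross c b2, DL (-e)] @ d))"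

end

theory Submission
  imports Defs
begin

text \<open>A crossing change is by definition a move (5) followed by a move (4). Performing
  a crossing change at c twice, once on each strand through c, restores the over/under
  information and the sign of c and leaves the pair of double lines e, -e around c on
  both strands, which is exactly the crossing sliding move.\<close>

lemma sw_sw [simp]: "sw c (sw c x) = x"
  by (cases x) auto

lemma sw_comp_sw [simp]: "sw c \<circ> sw c = id"
  by (rule ext) simp

lemma rot_eq_refl [simp]: "rot_eq u u"
  unfolding rot_eq_def by (metis rotate0 id_apply)

lemma crossing_change_imp_move5_move4:
  assumes "crossing_change c D D'"
  shows "(move5 OO move4) D D'"
proof -
  from assms obtain a d e b where e: "e \<in> {1, -1}"
    and D: "rot_eq (word D) (a @ [Cross c b] @ d)"
    and D': "rot_eq (word D') (map (sw c) (a @ [DL e, Cross c b, DL (-e)] @ d))"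
    and sign: "csign D' = (csign D)(c := - csign D c)"
    unfolding crossing_change_def by blast
  define X where "X = \<lparr>word = a @ [DL e, DL (-e)] @ Cross c b # d, csign = csign D\<rparr>"
  have "move5 D X"
    unfolding move5_def X_def using e D by fastforce
  moreover have "move4 X D'"
    unfolding move4_def
  proof (intro exI conjI disjI1)
    show "rot_eq (word X) ((a @ [DL e]) @ [DL (-e), Cross c b] @ d)"
      by (simp add: X_def)
    show "rot_eq (word D') (map (sw c) ((a @ [DL e]) @ [Cross c b, DL (-e)] @ d))"
      using D' by simp
    show "csign D' = (csign X)(c := - csign X c)"
      using sign by (simp add: X_def)
  qed
  ultimately show ?thesis by blast
qed

lemma crossing_slide_imp_crossing_change_twice:
  assumes "crossing_slide c D D'"
  shows "(crossing_change c OO crossing_change c) D D'"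
proof -
  from assms obtain a m d e b1 b2 where sign: "csign D' = csign D" and e: "e \<in> {1, -1}"
    and D: "rot_eq (word D) (a @ [Cross c b1] @ m @ [Cross c b2] @ d)"
    and D': "rot_eq (word D') (a @ [DL e, Cross c b1, DL (-e)] @ m @ [DL e, Cross c b2, DL (-e)] @ d)"
    unfolding crossing_slide_def by blast
  define a' where "a' = a @ [DL e, Cross c b1, DL (-e)] @ m"
  define D1 where "D1 = \<lparr>word = map (sw c) (a' @ [Cross c b2] @ d),
      csign = (csign D)(c := - csign D c)\<rparr>"
  have "crossing_change c D D1"
    unfolding crossing_change_def
  proof (intro exI conjI)
    show "rot_eq (word D) (a @ [Cross c b1] @ m @ [Cross c b2] @ d)"
      by (fact D)
    show "rot_eq (word D1) (map (sw c) (a @ [DL e, Cross c b1, DL (-e)] @ m @ [Cross c b2] @ d))"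
      by (simp add: D1_def a'_def)
  qed (use e in \<open>simp_all add: D1_def\<close>)
  moreover have "crossing_change c D1 D'"
    unfolding crossing_change_def
  proof (intro exI conjI)
    show "rot_eq (word D1) (map (sw c) a' @ [Cross c (\<not> b2)] @ map (sw c) d)"
      by (simp add: D1_def)
    show "rot_eq (word D')
        (map (sw c) (map (sw c) a' @ [DL e, Cross c (\<not> b2), DL (-e)] @ map (sw c) d))"
      using D' by (simp add: a'_def)
  qed (use e sign in \<open>simp_all add: D1_def\<close>)
  ultimately show ?thesis by blast
qed

theorem mainTheorem1:
  assumes "wf_diagram D" and "is_classical_crossing D c" and "crossing_slide c D D'"
  shows "\<exists>D1. crossing_change c D D1 \<and> crossing_change c D1 D'
           \<and> (move5 OO move4) D D1 \<and> (move5 OO move4) D1 D'"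
proof -
  from crossing_slide_imp_crossing_change_twice [OF assms(3)]
  obtain D1 where "crossing_change c D D1" and "crossing_change c D1 D'"
    by blast
  then show ?thesis
    using crossing_change_imp_move5_move4 by blast
qed

end
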